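(* Let $i\ge1$ and let $(a_j)_{j\ge1}$ satisfy $\delta_0\le a_j\le Aj$ for all $j\ge1$, for some $A>0$ and $\delta_0>0$. Let $y_0\in\mathcal X^+_{1,i}$ with $y_{i,0}>0$, and let $y$ be the solution of $dy/dt=F(y)$, $y(0)=y_0$. Let $$t_*:=\sup\{t>0:\ y_i(s)>0 \text{ for all } s\in[0,t)\}.$$ Then $t_*\in(0,\infty)$.
   Context: $\|x\|_{1,1}=\sum_j j|x_j|$, $\mathcal X_{1,1}=\{x:\|x\|_{1,1}<\infty\}$, $\mathcal X_{1,i}=\{x\in\mathcal X_{1,1}:x_j=0 \text{ for } j<i\}$, and $\mathcal X^+_{1,i}$ is the subset with nonnegative entries. $F$ is defined by - $F_j(y)=0$ for $j<i$; - $F_i(y)=-a_iy_i-\sum_{j\ge i}a_jy_j$; - $F_j(y)=a_{j-i}y_{j-i}-a_jy_j$ for $j\ge i+1$. The solution $y\in C([0,\infty);\mathcal X_{1,i})$, with $C^1$ components, exists and is unique. *)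

theory Defs
  imports "HOL-Analysis.Analysis"
begin

text \<open>Sequences x = (x_j)_{j>=1} are modelled as nat => real; index 0 is forced to be 0
  by membership in X_{1,i} with i >= 1.\<close>

definition norm11 :: "(nat \<Rightarrow> real) \<Rightarrow> real" where
  "norm11 x = (\<Sum>j. real j * \<bar>x j\<bar>)"

definition X11 :: "(nat \<Rightarrow> real) set" where
  "X11 = {x. summable (\<lambda>j. real j * \<bar>x j\<bar>)}"

definition X1i :: "nat \<Rightarrow> (nat \<Rightarrow> real) set" where
  "X1i i = {x \<in> X11. \<forall>j<i. x j = 0}"

definition X1i_pos :: "nat \<Rightarrow> (nat \<Rightarrow> real) set" where
  "X1i_pos i = {x \<in> X1i i. \<forall>j. 0 \<le> x j}"

definition Fcoag :: "(nat \<Rightarrow> real) \<Rightarrow> nat \<Rightarrow> (nat \<Rightarrow> real) \<Rightarrow> nat \<Rightarrow> real" where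
  "Fcoag a i y j =
    (if j < i then 0
     else if j = i then - a i * y i - (\<Sum>k. a (k + i) * y (k + i))
     else a (j - i) * y (j - i) - a j * y j)"

definition is_solution ::
  "(nat \<Rightarrow> real) \<Rightarrow> nat \<Rightarrow> (nat \<Rightarrow> real) \<Rightarrow> (real \<Rightarrow> nat \<Rightarrow> real) \<Rightarrow> bool" where
  "is_solution a i y0 y \<longleftrightarrow>
     (\<forall>t\<ge>0. y t \<in> X1i i) \<and>
     (\<forall>t\<ge>0. ((\<lambda>s. norm11 (\<lambda>j. y s j - y t j)) \<longlongrightarrow> 0) (at t within {0..})) \<and>
     y 0 = y0 \<and>
     (\<forall>j. \<forall>t\<ge>0. ((\<lambda>s. y s j) has_real_derivative Fcoag a i (y t) j) (at t within {0..})) \<and>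
     (\<forall>j. continuous_on {0..} (\<lambda>t. Fcoag a i (y t) j))"

end

theory Submission
  imports Defs
begin

(*
  The exit time t* of y_i from the positive half-line is positive because y_i is continuous
  with y_i(0) > 0, and it is finite because y_i cannot stay positive forever.

  For the latter, suppose y_i(s) > 0 for all s >= 0.  Then every component is nonnegative
  (integrating-factor argument, by strong induction on the index), and the total rate
  S(t) = sum_j a_j y_j(t) satisfies y_i' = -a_i y_i - S.  Only finite partial sums are ever
  differentiated: the particle count P_n = y_{i+1} + ... + y_n obeys
  P_{n+i}' = a_i y_i - (a_{n+1} y_{n+1} + ... + a_{n+i} y_{n+i}), and adding M such counts
  over consecutive blocks of length i gives a quantity R_M with R_M' >= M a_i y_i - S.
  Hence (R_M - y_i)' >= (M+1) a_i y_i, which forces R_M, and thus P_{(M+1)i} >= R_M / M,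
  to stay bounded below after time 1.  Since S >= delta0 P_n, the rate S is bounded below
  by some c > 0 on [1,oo), so y_i' <= -c there and y_i eventually becomes negative.
*)

lemma growth_from_deriv_lower_bound:
  fixes f :: "real \<Rightarrow> real"
  assumes "0 \<le> u" "u \<le> v"
    and deriv: "\<And>t. u \<le> t \<Longrightarrow> t \<le> v \<Longrightarrow>
                  \<exists>d. (f has_real_derivative d) (at t within {0..}) \<and> L \<le> d"
  shows "f u + L * (v - u) \<le> f v"
proof -
  let ?g = "\<lambda>t. f t - L * t"
  have "?g u \<le> ?g v"
  proof (rule DERIV_nonneg_imp_increasing_open[OF \<open>u \<le> v\<close>])
    fix x assume x: "u < x" "x < v"
    obtain d where d: "(f has_real_derivative d) (at x within {0..})" "L \<le> d"
      using deriv[of x] x by auto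
    have "at x within {0..} = at x"
      using x \<open>0 \<le> u\<close> by (intro at_within_interior) simp
    then have "DERIV ?g x :> d - L"
      using d(1) by (auto intro!: derivative_eq_intros)
    then show "\<exists>y. DERIV ?g x :> y \<and> y \<ge> 0" using d(2) by auto
  next
    have "continuous (at x within {0..}) f" if "x \<in> {u..v}" for x
      using deriv[of x] that by (auto intro: DERIV_continuous)
    moreover have "{u..v} \<subseteq> {0..}" using \<open>0 \<le> u\<close> by auto
    ultimately have "continuous_on {u..v} f"
      unfolding continuous_on_eq_continuous_within by (meson continuous_within_subset)
    then show "continuous_on {u..v} ?g" by (intro continuous_intros)
  qed
  then show ?thesis by (simp add: algebra_simps)
qed

lemma exit_time_pos_finite:
  fixes f :: "real \<Rightarrow> real"
  assumes cont: "continuous (at 0 within {0..}) f" and start: "f 0 > 0"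
    and exit: "s0 \<ge> 0" "f s0 \<le> 0"
  defines "T \<equiv> {t. t > 0 \<and> (\<forall>s\<in>{0..<t}. f s > 0)}"
  shows "0 < (SUP t\<in>T. ereal t) \<and> (SUP t\<in>T. ereal t) < \<infinity>"
proof
  obtain d where d: "d > 0" "\<forall>s\<in>{0..}. dist s 0 < d \<longrightarrow> dist (f s) (f 0) < f 0"
    using cont start unfolding continuous_within_eps_delta by blast
  then have "d \<in> T" by (auto simp: T_def dist_real_def)
  then have "ereal d \<le> (SUP t\<in>T. ereal t)" by (rule SUP_upper)
  moreover have "0 < ereal d" using d(1) by simp
  ultimately show "0 < (SUP t\<in>T. ereal t)" by (rule order.strict_trans2[rotated])
next
  have "t \<le> s0" if "t \<in> T" for t
    using that exit by (force simp: T_def not_le[symmetric])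
  then have "(SUP t\<in>T. ereal t) \<le> ereal s0" by (simp add: SUP_least)
  then show "(SUP t\<in>T. ereal t) < \<infinity>" by (rule order.strict_trans1) simp
qed

lemma sum_consecutive_blocks:
  fixes f :: "nat \<Rightarrow> 'a::comm_monoid_add"
  shows "(\<Sum>m<M. \<Sum>j\<in>{Suc ((m+1)*i)..(m+1)*i + i}. f j) = (\<Sum>j\<in>{Suc i..(M+1)*i}. f j)"
proof (induction M)
  case 0 then show ?case by simp
next
  case (Suc M)
  have "(\<Sum>j\<in>{Suc i..(Suc M+1)*i}. f j)
      = (\<Sum>j\<in>{Suc i..(M+1)*i}. f j) + (\<Sum>j\<in>{Suc ((M+1)*i)..(M+1)*i + i}. f j)"
    using sum.ub_add_nat[of "Suc i" "(M+1)*i" f i] by (simp add: algebra_simps)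
  then show ?case using Suc.IH by simp
qed

locale coag_solution =
  fixes i :: nat and a :: "nat \<Rightarrow> real" and A \<delta>0 :: real
    and y0 :: "nat \<Rightarrow> real" and y :: "real \<Rightarrow> nat \<Rightarrow> real"
  assumes i_pos: "i \<ge> 1" and \<delta>0_pos: "\<delta>0 > 0"
    and a_bounds: "\<forall>j\<ge>1. \<delta>0 \<le> a j \<and> a j \<le> A * real j"
    and y0_nonneg: "y0 \<in> X1i_pos i"
    and solution: "is_solution a i y0 y"
begin

lemma in_X1i: "t \<ge> 0 \<Longrightarrow> y t \<in> X1i i"
  using solution by (simp add: is_solution_def)

lemma below_i_zero: "t \<ge> 0 \<Longrightarrow> j < i \<Longrightarrow> y t j = 0"
  using in_X1i by (simp add: X1i_def)

lemma initial: "y 0 = y0"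
  using solution by (simp add: is_solution_def)

lemma has_deriv:
  "t \<ge> 0 \<Longrightarrow> ((\<lambda>s. y s j) has_real_derivative Fcoag a i (y t) j) (at t within {0..})"
  using solution by (simp add: is_solution_def)

lemma continuous_component: "t \<ge> 0 \<Longrightarrow> continuous (at t within {0..}) (\<lambda>s. y s j)"
  using has_deriv by (rule DERIV_continuous)

lemma a_lower: "j \<ge> 1 \<Longrightarrow> \<delta>0 \<le> a j"
  using a_bounds by blast

text \<open>The growth bound a_j <= A j makes the total rate finite on the state space.\<close>
lemma summable_rate:
  assumes x: "x \<in> X1i i"
  shows "summable (\<lambda>j. a j * x j)"
proof (rule summable_comparison_test)
  have sx: "summable (\<lambda>j. real j * \<bar>x j\<bar>)"
    using x by (simp add: X1i_def X11_def)
  show "summable (\<lambda>j. A * (real j * \<bar>x j\<bar>))" using sx by (rule summable_mult)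
  show "\<exists>N. \<forall>n\<ge>N. norm (a n * x n) \<le> A * (real n * \<bar>x n\<bar>)"
  proof (intro exI allI impI)
    fix n :: nat assume "n \<ge> 1"
    then have "\<bar>a n\<bar> \<le> A * real n" using a_bounds \<delta>0_pos by force
    then show "norm (a n * x n) \<le> A * (real n * \<bar>x n\<bar>)"
      by (simp add: abs_mult mult_right_mono mult.assoc[symmetric])
  qed
qed

text \<open>Equation for the smallest size i: since x vanishes below i, the tail sum in F_i
  is the full rate sum.\<close>
lemma Fcoag_at_i:
  assumes x: "x \<in> X1i i"
  shows "Fcoag a i x i = - a i * x i - (\<Sum>j. a j * x j)"
proof -
  have "(\<Sum>j. a j * x j) = (\<Sum>n. a (n + i) * x (n + i)) + (\<Sum>j<i. a j * x j)"
    by (rule suminf_split_initial_segment[OF summable_rate[OF x]])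
  also have "(\<Sum>j<i. a j * x j) = 0" using x by (simp add: X1i_def)
  finally show ?thesis by (simp add: Fcoag_def)
qed

text \<open>If y_i stays nonnegative, so does every component: y_j' = a_{j-i} y_{j-i} - a_j y_j
  for j > i, so exp(a_j t) y_j(t) is increasing once y_{j-i} >= 0.\<close>
lemma components_nonneg:
  assumes yi: "\<forall>s\<ge>0. 0 \<le> y s i" and t: "t \<ge> 0"
  shows "0 \<le> y t j"
  using t
proof (induction j arbitrary: t rule: less_induct)
  case (less j)
  consider "j < i" | "j = i" | "j > i" by linarith
  then show ?case
  proof cases
    case 1 then show ?thesis using below_i_zero less.prems by simp
  next
    case 2 then show ?thesis using yi less.prems by simp
  next
    case 3
    have "\<delta>0 \<le> a (j - i)" using a_lower[of "j - i"] 3 by simp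
    then have a_ji: "0 < a (j - i)" using \<delta>0_pos by simp
    let ?f = "\<lambda>s. exp (a j * s) * y s j"
    have "?f 0 + 0 * (t - 0) \<le> ?f t"
    proof (rule growth_from_deriv_lower_bound)
      fix s :: real assume s: "0 \<le> s"
      have "((\<lambda>s. exp (a j * s)) has_real_derivative exp (a j * s) * a j) (at s within {0..})"
        by (auto intro!: derivative_eq_intros)
      from DERIV_mult[OF this has_deriv[OF s, of j]]
      have "(?f has_real_derivative exp (a j * s) * (a (j - i) * y s (j - i))) (at s within {0..})"
        using 3 by (simp add: Fcoag_def algebra_simps)
      moreover have "0 \<le> exp (a j * s) * (a (j - i) * y s (j - i))"
        using less.IH[of "j - i" s] s 3 i_pos a_ji by simp
      ultimately show "\<exists>d. (?f has_real_derivative d) (at s within {0..}) \<and> 0 \<le> d" by blast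
    qed (use less.prems in auto)
    moreover have "0 \<le> y0 j" using y0_nonneg by (simp add: X1i_pos_def)
    ultimately have "0 \<le> exp (a j * t) * y t j" using initial by simp
    then show ?thesis by (simp add: zero_le_mult_iff)
  qed
qed

end

locale eternally_positive = coag_solution +
  assumes y_i_pos: "\<forall>s\<ge>0. y s i > 0"
begin

text \<open>Total rate at which particles of size i are consumed.\<close>
definition rate :: "real \<Rightarrow> real" where
  "rate t = (\<Sum>j. a j * y t j)"

definition count :: "nat \<Rightarrow> real \<Rightarrow> real" where
  "count n t = (\<Sum>j\<in>{Suc i..n}. y t j)"

definition block_count :: "nat \<Rightarrow> real \<Rightarrow> real" where
  "block_count M t = (\<Sum>m<M. count ((m+1)*i + i) t)"

lemma nonneg: "t \<ge> 0 \<Longrightarrow> 0 \<le> y t j"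
  using components_nonneg y_i_pos by (simp add: less_imp_le)

lemma weighted_nonneg: "t \<ge> 0 \<Longrightarrow> 0 \<le> a j * y t j"
  using nonneg[of t j] a_lower[of j] below_i_zero[of t j] i_pos \<delta>0_pos
  by (cases "j \<ge> 1") auto

lemma partial_le_rate: "t \<ge> 0 \<Longrightarrow> finite F \<Longrightarrow> (\<Sum>j\<in>F. a j * y t j) \<le> rate t"
  unfolding rate_def
  by (rule sum_le_suminf) (use summable_rate[OF in_X1i] weighted_nonneg in auto)

lemma count_le_rate:
  assumes t: "t \<ge> 0"
  shows "\<delta>0 * count n t \<le> rate t"
proof -
  have "\<delta>0 * count n t = (\<Sum>j\<in>{Suc i..n}. \<delta>0 * y t j)"
    by (simp add: count_def sum_distrib_left)
  also have "\<dots> \<le> (\<Sum>j\<in>{Suc i..n}. a j * y t j)"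
    using a_lower nonneg[OF t] i_pos by (intro sum_mono mult_right_mono) auto
  also have "\<dots> \<le> rate t" using partial_le_rate[OF t] by simp
  finally show ?thesis .
qed

lemma y_i_deriv:
  "t \<ge> 0 \<Longrightarrow> ((\<lambda>s. y s i) has_real_derivative - a i * y t i - rate t) (at t within {0..})"
  using has_deriv[of t i] Fcoag_at_i[OF in_X1i] by (simp add: rate_def)

text \<open>Particles of sizes i+1, ..., n+i are created by size-i particles merging with sizes
  up to n and lost when reaching sizes n+1, ..., n+i; the creation and loss terms for
  sizes i+1, ..., n cancel.\<close>
lemma count_deriv:
  assumes t: "t \<ge> 0" and n: "n \<ge> i"
  shows "((\<lambda>s. count (n + i) s) has_real_derivative
           a i * y t i - (\<Sum>j\<in>{Suc n..n + i}. a j * y t j)) (at t within {0..})"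
proof -
  define g where "g j = a j * y t j" for j
  have deriv: "((\<lambda>s. count (n + i) s) has_real_derivative
      (\<Sum>j\<in>{Suc i..n + i}. g (j - i) - g j)) (at t within {0..})"
    unfolding count_def
    by (rule DERIV_sum, rule has_deriv[OF t, THEN DERIV_cong]) (simp add: Fcoag_def g_def)
  have "(\<Sum>j\<in>{Suc i..n + i}. g (j - i)) = (\<Sum>k\<in>{1..n}. g k)"
    using sum.shift_bounds_cl_nat_ivl[of "\<lambda>j. g (j - i)" 1 i n] by simp
  also have "\<dots> = (\<Sum>k\<in>{i..n}. g k)"
    using below_i_zero[OF t] i_pos by (intro sum.mono_neutral_right) (auto simp: g_def)
  also have "\<dots> = g i + (\<Sum>k\<in>{Suc i..n}. g k)"
    using n by (rule sum.atLeast_Suc_atMost)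
  finally have created: "(\<Sum>j\<in>{Suc i..n + i}. g (j - i)) = g i + (\<Sum>k\<in>{Suc i..n}. g k)" .
  have lost: "(\<Sum>j\<in>{Suc i..n + i}. g j) = (\<Sum>j\<in>{Suc i..n}. g j) + (\<Sum>j\<in>{Suc n..n + i}. g j)"
    using sum.ub_add_nat[of "Suc i" n g i] n by simp
  show ?thesis
    using deriv created lost by (simp add: sum_subtractf g_def)
qed

text \<open>The losses of the M counts in block_count occur on disjoint consecutive blocks of
  sizes, which together cover the sizes i+1, ..., (M+1) i.\<close>
lemma block_count_deriv:
  assumes t: "t \<ge> 0"
  shows "((\<lambda>s. block_count M s) has_real_derivative
           real M * (a i * y t i) - (\<Sum>j\<in>{Suc i..(M+1)*i}. a j * y t j)) (at t within {0..})"
proof -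
  have "((\<lambda>s. block_count M s) has_real_derivative
      (\<Sum>m<M. a i * y t i - (\<Sum>j\<in>{Suc ((m+1)*i)..(m+1)*i + i}. a j * y t j))) (at t within {0..})"
    unfolding block_count_def by (intro DERIV_sum count_deriv[OF t]) simp
  then show ?thesis unfolding sum_subtractf sum_consecutive_blocks by simp
qed

lemma block_count_le: "t \<ge> 0 \<Longrightarrow> block_count M t \<le> real M * count ((M+1)*i) t"
proof -
  assume t: "t \<ge> 0"
  have "count ((m+1)*i + i) t \<le> count ((M+1)*i) t" if "m < M" for m
  proof -
    have "(m+1)*i + i \<le> (M+1)*i"
      using that mult_le_mono1[of "m+2" "M+1" i] by (simp add: algebra_simps)
    then show ?thesis
      unfolding count_def by (intro sum_mono2) (use nonneg[OF t] in auto)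
  qed
  then have "block_count M t \<le> (\<Sum>m<M. count ((M+1)*i) t)"
    unfolding block_count_def by (intro sum_mono) simp
  then show ?thesis by simp
qed

lemma gap_deriv:
  assumes t: "t \<ge> 0"
  shows "\<exists>d. ((\<lambda>s. block_count M s - y s i) has_real_derivative d) (at t within {0..})
             \<and> (real M + 1) * (a i * y t i) \<le> d"
proof (intro exI conjI)
  show "((\<lambda>s. block_count M s - y s i) has_real_derivative
      real M * (a i * y t i) - (\<Sum>j\<in>{Suc i..(M+1)*i}. a j * y t j) - (- a i * y t i - rate t))
      (at t within {0..})"
    using block_count_deriv[OF t] y_i_deriv[OF t] by (rule DERIV_diff)
  show "(real M + 1) * (a i * y t i) \<le>
      real M * (a i * y t i) - (\<Sum>j\<in>{Suc i..(M+1)*i}. a j * y t j) - (- a i * y t i - rate t)"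
    using partial_le_rate[OF t, of "{Suc i..(M+1)*i}"] by (simp add: algebra_simps)
qed

lemma a_i_pos: "a i > 0"
  using a_lower[OF i_pos] \<delta>0_pos by simp

lemma y_i_lower_bound_unit:
  obtains \<eta> where "\<eta> > 0" "\<And>s. 0 \<le> s \<Longrightarrow> s \<le> 1 \<Longrightarrow> \<eta> \<le> y s i"
proof -
  have "continuous (at s within {0..1}) (\<lambda>s. y s i)" if "s \<in> {0..1}" for s
  proof (rule continuous_within_subset)
    show "continuous (at s within {0..}) (\<lambda>s. y s i)"
      using that by (intro continuous_component) simp
  qed auto
  then have "continuous_on {0..1} (\<lambda>s. y s i)"
    by (simp add: continuous_on_eq_continuous_within)
  moreover have "{0..1::real} \<noteq> {}" by simp
  ultimately obtain s0 where s0: "s0 \<in> {0..1::real}" "\<forall>s\<in>{0..1}. y s0 i \<le> y s i"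
    using continuous_attains_inf[OF compact_Icc] by blast
  show ?thesis
  proof (rule that)
    show "y s0 i > 0" using y_i_pos s0(1) by simp
    show "\<And>s. 0 \<le> s \<Longrightarrow> s \<le> 1 \<Longrightarrow> y s0 i \<le> y s i" using s0(2) by simp
  qed
qed

text \<open>With y_i >= eta on [0,1], block_count M - y_i gains at least (M+1) a_i eta on [0,1] and
  never decreases, so M count((M+1) i) >= block_count M >= a_i eta once M a_i eta >= y_i(0).\<close>
lemma rate_bounded_below:
  obtains c where "c > 0" "\<And>s. s \<ge> 1 \<Longrightarrow> c \<le> rate s"
proof -
  obtain \<eta> where \<eta>: "\<eta> > 0" "\<And>s. 0 \<le> s \<Longrightarrow> s \<le> 1 \<Longrightarrow> \<eta> \<le> y s i"
    using y_i_lower_bound_unit by blast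
  have a\<eta>: "a i * \<eta> > 0" using a_i_pos \<eta>(1) by simp
  obtain M :: nat where M: "y 0 i < real M * (a i * \<eta>)"
    using ex_less_of_nat_mult[OF a\<eta>] by blast
  have M_pos: "real M > 0"
    using M y_i_pos a\<eta> by (cases "M = 0") auto
  define gap where "gap s = block_count M s - y s i" for s
  have early: "gap 0 + (real M + 1) * (a i * \<eta>) * (1 - 0) \<le> gap 1"
  proof (rule growth_from_deriv_lower_bound)
    fix t :: real assume t: "0 \<le> t" "t \<le> 1"
    have "(real M + 1) * (a i * \<eta>) \<le> (real M + 1) * (a i * y t i)"
      using \<eta>(2)[OF t] a_i_pos by simp
    then show "\<exists>d. (gap has_real_derivative d) (at t within {0..}) \<and> (real M + 1) * (a i * \<eta>) \<le> d"
      using gap_deriv[OF t(1), of M] unfolding gap_def by (meson order.trans)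
  qed auto
  have late: "gap 1 + 0 * (s - 1) \<le> gap s" if s: "s \<ge> 1" for s
  proof (rule growth_from_deriv_lower_bound)
    fix t :: real assume t: "1 \<le> t" "t \<le> s"
    have "0 < y t i" using y_i_pos t by simp
    then have "0 \<le> (real M + 1) * (a i * y t i)" using a_i_pos by simp
    then show "\<exists>d. (gap has_real_derivative d) (at t within {0..}) \<and> 0 \<le> d"
      using gap_deriv[of t M] t unfolding gap_def by force
  qed (use s in auto)
  define c where "c = \<delta>0 * (a i * \<eta> / real M)"
  show ?thesis
  proof (rule that[of c])
    show "c > 0" using \<delta>0_pos a\<eta> M_pos by (simp add: c_def)
  next
    fix s :: real assume s: "s \<ge> 1"
    have "0 \<le> block_count M 0"
      unfolding block_count_def count_def by (intro sum_nonneg) (simp add: nonneg)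
    moreover have "0 < y s i" using y_i_pos[rule_format, of s] s by simp
    ultimately have "a i * \<eta> \<le> block_count M s"
      using early late[OF s] M by (simp add: gap_def algebra_simps)
    also have "\<dots> \<le> real M * count ((M+1)*i) s" using s by (intro block_count_le) simp
    finally have "a i * \<eta> / real M \<le> count ((M+1)*i) s"
      using M_pos by (simp add: divide_le_eq mult.commute)
    then have "c \<le> \<delta>0 * count ((M+1)*i) s"
      using \<delta>0_pos unfolding c_def by (intro mult_left_mono) simp_all
    also have "\<dots> \<le> rate s" using s by (intro count_le_rate) simp
    finally show "c \<le> rate s" .
  qed
qed

text \<open>Hence y_i' <= -c on [1,oo), and y_i becomes negative by time 2 + y_i(1)/c.\<close>
lemma no_eternal_positivity: False
proof -
  obtain c where c: "c > 0" "\<And>s. s \<ge> 1 \<Longrightarrow> c \<le> rate s"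
    using rate_bounded_below by blast
  define b where "b = 2 + y 1 i / c"
  have "0 < y 1 i" using y_i_pos by simp
  then have b: "b \<ge> 1" using c(1) by (simp add: b_def)
  have "- y 1 i + c * (b - 1) \<le> - y b i"
  proof (rule growth_from_deriv_lower_bound[where f = "\<lambda>t. - y t i"])
    fix t :: real assume t: "1 \<le> t" "t \<le> b"
    have "((\<lambda>t. - y t i) has_real_derivative a i * y t i + rate t) (at t within {0..})"
      using DERIV_minus[OF y_i_deriv, of t] t by (simp add: add.commute)
    moreover have "c \<le> a i * y t i + rate t"
      using c(2)[of t] a_i_pos y_i_pos t by (smt (verit) mult_pos_pos)
    ultimately show "\<exists>d. ((\<lambda>t. - y t i) has_real_derivative d) (at t within {0..}) \<and> c \<le> d"
      by blast
  qed (use b in auto)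
  moreover have "c * (b - 1) = c + y 1 i" using c(1) by (simp add: b_def algebra_simps)
  ultimately have "y b i < 0" using c(1) by simp
  then show False using y_i_pos[rule_format, of b] b by simp
qed

end

lemma (in coag_solution) eventually_nonpositive: "\<exists>s\<ge>0. y s i \<le> 0"
proof (rule ccontr)
  assume "\<not> (\<exists>s\<ge>0. y s i \<le> 0)"
  then interpret eternally_positive i a A \<delta>0 y0 y
    by unfold_locales auto
  show False by (rule no_eternal_positivity)
qed

theorem proposition2p4:
  fixes i :: nat and a :: "nat \<Rightarrow> real" and A \<delta>0 :: real
    and y0 :: "nat \<Rightarrow> real" and y :: "real \<Rightarrow> nat \<Rightarrow> real"
  assumes "i \<ge> 1"
    and "A > 0" and "\<delta>0 > 0"
    and "\<forall>j\<ge>1. \<delta>0 \<le> a j \<and> a j \<le> A * real j"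
    and "y0 \<in> X1i_pos i" and "y0 i > 0"
    and "is_solution a i y0 y"
  shows "0 < (SUP t\<in>{t. t > 0 \<and> (\<forall>s\<in>{0..<t}. y s i > 0)}. ereal t)
       \<and> (SUP t\<in>{t. t > 0 \<and> (\<forall>s\<in>{0..<t}. y s i > 0)}. ereal t) < \<infinity>"
proof -
  interpret coag_solution i a A \<delta>0 y0 y
    using assms by unfold_locales
  obtain s0 where "s0 \<ge> 0" "y s0 i \<le> 0"
    using eventually_nonpositive by blast
  then show ?thesis
    using exit_time_pos_finite[of "\<lambda>s. y s i"] continuous_component[of 0 i] initial assms(6)
    by simp
qed

end
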